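(* Let $A,B\in\mathrm{M}_n(\mathbb{C})$ and let $p(x)=\sum_{k=0}^d a_kx^k\in\mathbb{C}[x]$ be a nonconstant polynomial of degree $d\geq 1$. Write $[A,B]=AB-BA$ and $p[A,B]=p(AB)-p(BA)$. Then (i) $\displaystyle \|p[A,B]\|_F\le \|[A,B]\|_F\sum_{k=1}^d |a_k|\,k\,\|A\|_F^{k-1}\|B\|_F^{k-1}$; (ii) $\displaystyle h(p[A,B])\le h([A,B])\sum_{k=1}^d |a_k|\,k\,2^{2k-1}\,h(A)^{k-1}h(B)^{k-1}$.
   Context: $\|X\|_F=\sqrt{\mathrm{trace}(X^*X)}$ is the Frobenius norm and $h(X)=\max\{|v^*Xv| : v\in\mathbb{C}^n,\ \|v\|=1\}$ is the numerical radius of $X\in\mathrm{M}_n(\mathbb{C})$. *)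

theory Defs
  imports "Jordan_Normal_Form.Schur_Decomposition" "HOL-Computational_Algebra.Polynomial"
begin

definition mat_trace :: "complex mat \<Rightarrow> complex" where
  "mat_trace X = (\<Sum>i<dim_row X. X $$ (i, i))"

(* Frobenius norm: sqrt(trace(X^* X)); the trace is a nonnegative real, we take its real part *)
definition frob_norm :: "complex mat \<Rightarrow> real" where
  "frob_norm X = sqrt (Re (mat_trace (mat_adjoint X * X)))"

definition cvec_norm :: "complex vec \<Rightarrow> real" where
  "cvec_norm v = sqrt (Re (v \<bullet>c v))"

definition num_radius :: "complex mat \<Rightarrow> real" where
  "num_radius X = Sup {cmod (conjugate v \<bullet> (X *\<^sub>v v)) | v.
                       v \<in> carrier_vec (dim_col X) \<and> cvec_norm v = 1}"

definition poly_mat :: "complex poly \<Rightarrow> complex mat \<Rightarrow> complex mat" where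
  "poly_mat p X = mat (dim_row X) (dim_col X)
     (\<lambda>(i, j). \<Sum>k\<le>degree p. coeff p k * (X ^\<^sub>m k) $$ (i, j))"

definition commutator :: "complex mat \<Rightarrow> complex mat \<Rightarrow> complex mat" where
  "commutator A B = A * B - B * A"

definition poly_commutator :: "complex poly \<Rightarrow> complex mat \<Rightarrow> complex mat \<Rightarrow> complex mat" where
  "poly_commutator p A B = poly_mat p (A * B) - poly_mat p (B * A)"

end

(*
  With X = AB and Y = BA one has X - Y = [A,B] and X^(k+1) - Y^(k+1) = X^k (X - Y) + (X^k - Y^k) Y,
  so for every submultiplicative norm ||X^k - Y^k|| <= k ||A||^(k-1) ||B||^(k-1) ||[A,B]||, and
  summing against the coefficients of p bounds p[A,B]. The Frobenius norm is submultiplicative,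
  which gives (i). The numerical radius is not, but it is equivalent to the operator norm,
  h(X) <= ||X|| <= 2 h(X) (the upper bound by polarization); running the argument for the
  operator norm with the bounds 2 h(A), 2 h(B), 2 h([A,B]) gives (ii), the factor 2^(2k-1)
  collecting these doublings.
*)

theory Submission
  imports Defs "HOL-Analysis.L2_Norm"
begin

lemma conjugate_scalar_prod_self_sum:
  "conjugate v \<bullet> v = complex_of_real (\<Sum>i<dim_vec v. (cmod (v $ i))\<^sup>2)"
  unfolding scalar_prod_def of_real_sum lessThan_atLeast0
  by (intro sum.cong refl) (subst complex_norm_square, simp add: mult.commute)

lemma cvec_norm_eq_L2_set: "cvec_norm v = L2_set (\<lambda>i. cmod (v $ i)) {..<dim_vec v}"
proof -
  have "v \<bullet>c v = conjugate v \<bullet> v"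
    by (intro comm_scalar_prod[of _ "dim_vec v"]) auto
  then show ?thesis
    unfolding cvec_norm_def L2_set_def conjugate_scalar_prod_self_sum by simp
qed

lemma cvec_norm_nonneg: "0 \<le> cvec_norm v"
  by (simp add: cvec_norm_eq_L2_set)

lemma cvec_norm_sq: "(cvec_norm v)\<^sup>2 = (\<Sum>i<dim_vec v. (cmod (v $ i))\<^sup>2)"
  by (simp add: cvec_norm_eq_L2_set L2_set_def sum_nonneg)

lemma conjugate_scalar_prod_self: "conjugate v \<bullet> v = complex_of_real ((cvec_norm v)\<^sup>2)"
  by (simp add: conjugate_scalar_prod_self_sum cvec_norm_sq)

lemma cvec_norm_conjugate: "cvec_norm (conjugate v) = cvec_norm v"
  unfolding cvec_norm_eq_L2_set by (intro L2_set_cong) auto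

lemma cvec_norm_smult: "cvec_norm (s \<cdot>\<^sub>v v) = cmod s * cvec_norm v"
proof -
  have "cvec_norm (s \<cdot>\<^sub>v v) = L2_set (\<lambda>i. cmod s * cmod (v $ i)) {..<dim_vec v}"
    unfolding cvec_norm_eq_L2_set by (intro L2_set_cong) (auto simp: norm_mult)
  then show ?thesis
    by (simp add: cvec_norm_eq_L2_set L2_set_right_distrib)
qed

lemma cvec_norm_add_le:
  assumes "u \<in> carrier_vec n" "v \<in> carrier_vec n"
  shows "cvec_norm (u + v) \<le> cvec_norm u + cvec_norm v"
proof -
  have "cvec_norm (u + v) \<le> L2_set (\<lambda>i. cmod (u $ i) + cmod (v $ i)) {..<n}"
    using assms unfolding cvec_norm_eq_L2_set
    by (auto intro!: L2_set_mono simp: norm_triangle_ineq)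
  also have "\<dots> \<le> cvec_norm u + cvec_norm v"
    using assms unfolding cvec_norm_eq_L2_set by (simp add: L2_set_triangle_ineq)
  finally show ?thesis .
qed

lemma cmod_scalar_prod_le:
  assumes "u \<in> carrier_vec n" "v \<in> carrier_vec n"
  shows "cmod (u \<bullet> v) \<le> cvec_norm u * cvec_norm v"
proof -
  have "cmod (u \<bullet> v) \<le> (\<Sum>i<n. \<bar>cmod (u $ i)\<bar> * \<bar>cmod (v $ i)\<bar>)"
    using assms unfolding scalar_prod_def
    by (auto simp: lessThan_atLeast0 norm_mult intro: order.trans[OF norm_sum])
  also have "\<dots> \<le> cvec_norm u * cvec_norm v"
    using assms L2_set_mult_ineq[of "\<lambda>i. cmod (u $ i)" "\<lambda>i. cmod (v $ i)" "{..<n}"]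
    unfolding cvec_norm_eq_L2_set by simp
  finally show ?thesis .
qed

lemma frob_norm_eq_L2_set_col:
  assumes "X \<in> carrier_mat m n"
  shows "frob_norm X = L2_set (\<lambda>j. cvec_norm (col X j)) {..<n}"
proof -
  have "mat_trace (mat_adjoint X * X) = (\<Sum>j<n. conjugate (col X j) \<bullet> col X j)"
    using assms unfolding mat_trace_def mat_adjoint_def by simp
  then show ?thesis
    unfolding frob_norm_def L2_set_def conjugate_scalar_prod_self by (simp add: Re_sum)
qed

lemma frob_norm_nonneg: "X \<in> carrier_mat m n \<Longrightarrow> 0 \<le> frob_norm X"
  by (simp add: frob_norm_eq_L2_set_col)

lemma frob_norm_eq_L2_set_row:
  assumes "X \<in> carrier_mat m n"
  shows "frob_norm X = L2_set (\<lambda>i. cvec_norm (row X i)) {..<m}"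
proof -
  have "(\<Sum>j<n. (cvec_norm (col X j))\<^sup>2) = (\<Sum>j<n. \<Sum>i<m. (cmod (X $$ (i, j)))\<^sup>2)"
    using assms unfolding cvec_norm_sq by (intro sum.cong refl) auto
  also have "\<dots> = (\<Sum>i<m. \<Sum>j<n. (cmod (X $$ (i, j)))\<^sup>2)"
    by (rule sum.swap)
  also have "\<dots> = (\<Sum>i<m. (cvec_norm (row X i))\<^sup>2)"
    using assms unfolding cvec_norm_sq by (intro sum.cong refl) auto
  finally show ?thesis
    unfolding frob_norm_eq_L2_set_col[OF assms] L2_set_def by simp
qed

lemma frob_norm_add_le:
  assumes X: "X \<in> carrier_mat m n" and Y: "Y \<in> carrier_mat m n"
  shows "frob_norm (X + Y) \<le> frob_norm X + frob_norm Y"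
proof -
  have "frob_norm (X + Y) \<le> L2_set (\<lambda>j. cvec_norm (col X j) + cvec_norm (col Y j)) {..<n}"
    using assms unfolding frob_norm_eq_L2_set_col[OF add_carrier_mat[OF Y]]
    by (intro L2_set_mono) (auto intro: cvec_norm_add_le[of _ m] simp: cvec_norm_nonneg)
  also have "\<dots> \<le> frob_norm X + frob_norm Y"
    unfolding frob_norm_eq_L2_set_col[OF X] frob_norm_eq_L2_set_col[OF Y] by (rule L2_set_triangle_ineq)
  finally show ?thesis .
qed

lemma frob_norm_smult:
  assumes "X \<in> carrier_mat m n"
  shows "frob_norm (s \<cdot>\<^sub>m X) = cmod s * frob_norm X"
proof -
  have "frob_norm (s \<cdot>\<^sub>m X) = L2_set (\<lambda>j. cmod s * cvec_norm (col X j)) {..<n}"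
    using assms unfolding frob_norm_eq_L2_set_col[OF smult_carrier_mat[OF assms]]
    by (intro L2_set_cong) (auto simp: cvec_norm_smult)
  then show ?thesis
    using assms by (simp add: frob_norm_eq_L2_set_col L2_set_right_distrib)
qed

lemma cvec_norm_mult_mat_vec_le:
  assumes X: "X \<in> carrier_mat m n" and v: "v \<in> carrier_vec n"
  shows "cvec_norm (X *\<^sub>v v) \<le> frob_norm X * cvec_norm v"
proof -
  have "cvec_norm (X *\<^sub>v v) = L2_set (\<lambda>i. cmod (row X i \<bullet> v)) {..<m}"
    using X unfolding cvec_norm_eq_L2_set by (intro L2_set_cong) auto
  also have "\<dots> \<le> L2_set (\<lambda>i. cvec_norm (row X i) * cvec_norm v) {..<m}"
    using assms by (intro L2_set_mono cmod_scalar_prod_le[of _ n]) auto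
  also have "\<dots> = frob_norm X * cvec_norm v"
    by (simp add: L2_set_left_distrib cvec_norm_nonneg frob_norm_eq_L2_set_row[OF X])
  finally show ?thesis .
qed

lemma frob_norm_mult_le:
  assumes X: "X \<in> carrier_mat m k" and Y: "Y \<in> carrier_mat k n"
  shows "frob_norm (X * Y) \<le> frob_norm X * frob_norm Y"
proof -
  have "frob_norm (X * Y) = L2_set (\<lambda>j. cvec_norm (X *\<^sub>v col Y j)) {..<n}"
    unfolding frob_norm_eq_L2_set_col[OF mult_carrier_mat[OF X Y]]
    by (intro L2_set_cong refl arg_cong[where f = cvec_norm] col_mult2[OF X Y]) simp
  also have "\<dots> \<le> L2_set (\<lambda>j. frob_norm X * cvec_norm (col Y j)) {..<n}"
    using assms by (intro L2_set_mono cvec_norm_mult_mat_vec_le) (auto simp: cvec_norm_nonneg)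
  also have "\<dots> = frob_norm X * frob_norm Y"
    using frob_norm_nonneg[OF X] by (simp add: L2_set_right_distrib frob_norm_eq_L2_set_col[OF Y])
  finally show ?thesis .
qed

section \<open>Polynomial commutators under a submultiplicative norm bound\<close>

definition mat_sum :: "nat \<Rightarrow> 'i set \<Rightarrow> ('i \<Rightarrow> 'a :: comm_monoid_add mat) \<Rightarrow> 'a mat" where
  "mat_sum n I f = mat n n (\<lambda>ij. \<Sum>k\<in>I. f k $$ ij)"

lemma mat_sum_empty: "mat_sum n {} f = 0\<^sub>m n n"
  unfolding mat_sum_def by (rule eq_matI) auto

lemma mat_sum_insert:
  assumes "finite I" "k \<notin> I" "f k \<in> carrier_mat n n"
  shows "mat_sum n (insert k I) f = f k + mat_sum n I f"
  using assms unfolding mat_sum_def by (intro eq_matI) auto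

lemma pow_mat_Suc_diff:
  fixes X Y :: "'a :: ring_1 mat"
  assumes X: "X \<in> carrier_mat n n" and Y: "Y \<in> carrier_mat n n"
  shows "X ^\<^sub>m Suc k - Y ^\<^sub>m Suc k = X ^\<^sub>m k * (X - Y) + (X ^\<^sub>m k - Y ^\<^sub>m k) * Y"
proof -
  have Xk: "X ^\<^sub>m k \<in> carrier_mat n n" and Yk: "Y ^\<^sub>m k \<in> carrier_mat n n"
    using X Y by auto
  have "X ^\<^sub>m k * (X - Y) + (X ^\<^sub>m k - Y ^\<^sub>m k) * Y
      = (X ^\<^sub>m k * X - X ^\<^sub>m k * Y) + (X ^\<^sub>m k * Y - Y ^\<^sub>m k * Y)"
    using mult_minus_distrib_mat[OF Xk X Y] minus_mult_distrib_mat[OF Xk Yk Y] by simp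
  also have "\<dots> = X ^\<^sub>m k * X - Y ^\<^sub>m k * Y"
    using X Y Xk Yk by (intro eq_matI) auto
  finally show ?thesis by simp
qed

lemma poly_mat_diff_eq_mat_sum:
  assumes X: "X \<in> carrier_mat n n" and Y: "Y \<in> carrier_mat n n"
  shows "poly_mat p X - poly_mat p Y
    = mat_sum n {1..degree p} (\<lambda>k. coeff p k \<cdot>\<^sub>m (X ^\<^sub>m k - Y ^\<^sub>m k))"
proof (rule eq_matI)
  fix i j assume "i < dim_row (mat_sum n {1..degree p} (\<lambda>k. coeff p k \<cdot>\<^sub>m (X ^\<^sub>m k - Y ^\<^sub>m k)))"
    and "j < dim_col (mat_sum n {1..degree p} (\<lambda>k. coeff p k \<cdot>\<^sub>m (X ^\<^sub>m k - Y ^\<^sub>m k)))"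
  then have i: "i < n" and j: "j < n" by (auto simp: mat_sum_def)
  have "{..degree p} = insert 0 {1..degree p}" by auto
  then have "(poly_mat p X - poly_mat p Y) $$ (i, j)
      = (\<Sum>k\<in>insert 0 {1..degree p}. coeff p k * ((X ^\<^sub>m k) $$ (i, j) - (Y ^\<^sub>m k) $$ (i, j)))"
    using X Y i j by (simp add: poly_mat_def sum_subtractf[symmetric] algebra_simps)
  also have "\<dots> = (\<Sum>k\<in>{1..degree p}. coeff p k * ((X ^\<^sub>m k) $$ (i, j) - (Y ^\<^sub>m k) $$ (i, j)))"
    using X Y i j by simp
  finally show "(poly_mat p X - poly_mat p Y) $$ (i, j)
      = mat_sum n {1..degree p} (\<lambda>k. coeff p k \<cdot>\<^sub>m (X ^\<^sub>m k - Y ^\<^sub>m k)) $$ (i, j)"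
    using X Y i j by (simp add: mat_sum_def pow_mat_dim_square)
qed (use X Y in \<open>auto simp: poly_mat_def mat_sum_def\<close>)

text \<open>The norm axioms are stated for a bound relation rather than a norm function, so that
  the operator norm can be used without defining it as a supremum.\<close>

locale matrix_norm_bound =
  fixes n :: nat and bounded_by :: "complex mat \<Rightarrow> real \<Rightarrow> bool"
  assumes bounded_by_zero: "bounded_by (0\<^sub>m n n) 0"
    and bounded_by_add: "\<And>X Y a b. X \<in> carrier_mat n n \<Longrightarrow> Y \<in> carrier_mat n n \<Longrightarrow>
      bounded_by X a \<Longrightarrow> bounded_by Y b \<Longrightarrow> bounded_by (X + Y) (a + b)"
    and bounded_by_mult: "\<And>X Y a b. X \<in> carrier_mat n n \<Longrightarrow> Y \<in> carrier_mat n n \<Longrightarrow>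
      bounded_by X a \<Longrightarrow> bounded_by Y b \<Longrightarrow> bounded_by (X * Y) (a * b)"
    and bounded_by_smult: "\<And>X a s. X \<in> carrier_mat n n \<Longrightarrow>
      bounded_by X a \<Longrightarrow> bounded_by (s \<cdot>\<^sub>m X) (cmod s * a)"
begin

lemma bounded_by_mat_sum:
  assumes "finite I" and "\<And>k. k \<in> I \<Longrightarrow> f k \<in> carrier_mat n n \<and> bounded_by (f k) (c k)"
  shows "bounded_by (mat_sum n I f) (\<Sum>k\<in>I. c k)"
  using assms
proof (induction I rule: finite_induct)
  case empty
  then show ?case by (simp add: mat_sum_empty bounded_by_zero)
next
  case (insert k I)
  have "mat_sum n I f \<in> carrier_mat n n" by (simp add: mat_sum_def)
  with insert show ?case by (simp add: mat_sum_insert bounded_by_add)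
qed

lemma bounded_by_pow:
  assumes X: "X \<in> carrier_mat n n" and a: "bounded_by X a" and "k \<ge> 1"
  shows "bounded_by (X ^\<^sub>m k) (a ^ k)"
  using \<open>k \<ge> 1\<close>
proof (induction k rule: nat_induct_at_least)
  case base
  then show ?case using a by simp
next
  case (Suc k)
  then show ?case
    using bounded_by_mult[OF pow_carrier_mat[OF X] X Suc.IH a] by (simp add: mult.commute)
qed

lemma bounded_by_pow_diff:
  assumes X: "X \<in> carrier_mat n n" and Y: "Y \<in> carrier_mat n n"
    and a: "bounded_by X a" "bounded_by Y a" and c: "bounded_by (X - Y) c" and "k \<ge> 1"
  shows "bounded_by (X ^\<^sub>m k - Y ^\<^sub>m k) (real k * a ^ (k - 1) * c)"
  using \<open>k \<ge> 1\<close>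
proof (induction k rule: nat_induct_at_least)
  case base
  then show ?case using X Y c by simp
next
  case (Suc k)
  have Xk: "X ^\<^sub>m k \<in> carrier_mat n n" and XYk: "X ^\<^sub>m k - Y ^\<^sub>m k \<in> carrier_mat n n"
    using X Y by auto
  have "bounded_by (X ^\<^sub>m k * (X - Y) + (X ^\<^sub>m k - Y ^\<^sub>m k) * Y)
          (a ^ k * c + real k * a ^ (k - 1) * c * a)"
  proof (rule bounded_by_add)
    show "bounded_by (X ^\<^sub>m k * (X - Y)) (a ^ k * c)"
      by (rule bounded_by_mult[OF Xk minus_carrier_mat[OF Y] bounded_by_pow[OF X a(1) Suc.hyps] c])
    show "bounded_by ((X ^\<^sub>m k - Y ^\<^sub>m k) * Y) (real k * a ^ (k - 1) * c * a)"
      using bounded_by_mult[OF XYk Y Suc.IH a(2)] .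
  qed (rule mult_carrier_mat[OF Xk minus_carrier_mat[OF Y]] mult_carrier_mat[OF XYk Y])+
  moreover have "a ^ k * c + real k * a ^ (k - 1) * c * a = real (Suc k) * a ^ (Suc k - 1) * c"
    using Suc.hyps by (cases k) (simp_all add: algebra_simps)
  ultimately show ?case
    unfolding pow_mat_Suc_diff[OF X Y] by metis
qed

lemma bounded_by_poly_commutator:
  assumes A: "A \<in> carrier_mat n n" and B: "B \<in> carrier_mat n n"
    and a: "bounded_by A a" and b: "bounded_by B b" and c: "bounded_by (commutator A B) c"
  shows "bounded_by (poly_commutator p A B)
     (c * (\<Sum>k=1..degree p. cmod (coeff p k) * real k * a ^ (k - 1) * b ^ (k - 1)))"
proof -
  have AB: "A * B \<in> carrier_mat n n" and BA: "B * A \<in> carrier_mat n n"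
    using A B by auto
  have ab: "bounded_by (A * B) (a * b)" and ba: "bounded_by (B * A) (a * b)"
    using bounded_by_mult[OF A B a b] bounded_by_mult[OF B A b a] by (simp_all add: mult.commute)
  have D: "(A * B) ^\<^sub>m k - (B * A) ^\<^sub>m k \<in> carrier_mat n n" for k
    by (intro minus_carrier_mat pow_carrier_mat BA)
  have "bounded_by (A * B - B * A) c"
    using c by (simp add: commutator_def)
  then have "bounded_by (coeff p k \<cdot>\<^sub>m ((A * B) ^\<^sub>m k - (B * A) ^\<^sub>m k))
      (cmod (coeff p k) * (real k * (a * b) ^ (k - 1) * c))" if "k \<ge> 1" for k
    by (intro bounded_by_smult[OF D] bounded_by_pow_diff[OF AB BA ab ba _ that])
  then have "bounded_by (mat_sum n {1..degree p} (\<lambda>k. coeff p k \<cdot>\<^sub>m ((A * B) ^\<^sub>m k - (B * A) ^\<^sub>m k)))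
      (\<Sum>k=1..degree p. cmod (coeff p k) * (real k * (a * b) ^ (k - 1) * c))"
    by (intro bounded_by_mat_sum conjI smult_carrier_mat D) auto
  moreover have "(\<Sum>k=1..degree p. cmod (coeff p k) * (real k * (a * b) ^ (k - 1) * c))
      = c * (\<Sum>k=1..degree p. cmod (coeff p k) * real k * a ^ (k - 1) * b ^ (k - 1))"
    by (simp add: sum_distrib_left power_mult_distrib algebra_simps)
  ultimately show ?thesis
    unfolding poly_commutator_def poly_mat_diff_eq_mat_sum[OF AB BA] by simp
qed

end

interpretation frobenius: matrix_norm_bound n "\<lambda>X c. frob_norm X \<le> c" for n
proof
  show "frob_norm (0\<^sub>m n n) \<le> 0"
    using frob_norm_smult[of "0\<^sub>m n n" n n 0] by simp
next
  fix X Y :: "complex mat" and a b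
  assume X: "X \<in> carrier_mat n n" and Y: "Y \<in> carrier_mat n n"
    and a: "frob_norm X \<le> a" and b: "frob_norm Y \<le> b"
  show "frob_norm (X + Y) \<le> a + b"
    using frob_norm_add_le[OF X Y] a b by simp
  show "frob_norm (X * Y) \<le> a * b"
    using frob_norm_mult_le[OF X Y] frob_norm_nonneg[OF X] frob_norm_nonneg[OF Y] a b
    by (meson mult_mono order_trans)
next
  fix X :: "complex mat" and a s
  assume "X \<in> carrier_mat n n" and "frob_norm X \<le> a"
  then show "frob_norm (s \<cdot>\<^sub>m X) \<le> cmod s * a"
    by (simp add: frob_norm_smult mult_left_mono)
qed

section \<open>Operator norm and numerical radius\<close>

definition op_norm_le :: "complex mat \<Rightarrow> real \<Rightarrow> bool" where
  "op_norm_le X c \<longleftrightarrow>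
     0 \<le> c \<and> (\<forall>v \<in> carrier_vec (dim_col X). cvec_norm (X *\<^sub>v v) \<le> c * cvec_norm v)"

interpretation operator: matrix_norm_bound n op_norm_le for n
proof
  show "op_norm_le (0\<^sub>m n n) 0"
    unfolding op_norm_le_def cvec_norm_eq_L2_set
    by (auto intro!: eq_refl L2_set_0' simp: scalar_prod_def)
next
  fix X Y :: "complex mat" and a b
  assume X: "X \<in> carrier_mat n n" and Y: "Y \<in> carrier_mat n n"
    and a: "op_norm_le X a" and b: "op_norm_le Y b"
  have a0: "0 \<le> a" and b0: "0 \<le> b"
    and Xv: "\<And>v. v \<in> carrier_vec n \<Longrightarrow> cvec_norm (X *\<^sub>v v) \<le> a * cvec_norm v"
    and Yv: "\<And>v. v \<in> carrier_vec n \<Longrightarrow> cvec_norm (Y *\<^sub>v v) \<le> b * cvec_norm v"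
    using X Y a b unfolding op_norm_le_def by auto
  show "op_norm_le (X + Y) (a + b)"
    unfolding op_norm_le_def
  proof (intro conjI ballI)
    fix v :: "complex vec" assume "v \<in> carrier_vec (dim_col (X + Y))"
    then have v: "v \<in> carrier_vec n" using Y by simp
    have "cvec_norm ((X + Y) *\<^sub>v v) = cvec_norm (X *\<^sub>v v + Y *\<^sub>v v)"
      using X Y v by (simp add: add_mult_distrib_mat_vec)
    also have "\<dots> \<le> cvec_norm (X *\<^sub>v v) + cvec_norm (Y *\<^sub>v v)"
      using X Y v by (intro cvec_norm_add_le[of _ n]) auto
    also have "\<dots> \<le> (a + b) * cvec_norm v"
      using Xv[OF v] Yv[OF v] by (simp add: algebra_simps)
    finally show "cvec_norm ((X + Y) *\<^sub>v v) \<le> (a + b) * cvec_norm v" .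
  qed (use a0 b0 in simp)
  show "op_norm_le (X * Y) (a * b)"
    unfolding op_norm_le_def
  proof (intro conjI ballI)
    fix v :: "complex vec" assume "v \<in> carrier_vec (dim_col (X * Y))"
    then have v: "v \<in> carrier_vec n" using Y by simp
    have "cvec_norm ((X * Y) *\<^sub>v v) = cvec_norm (X *\<^sub>v (Y *\<^sub>v v))"
      using X Y v by simp
    also have "\<dots> \<le> a * cvec_norm (Y *\<^sub>v v)"
      using Xv Y v by simp
    also have "\<dots> \<le> a * (b * cvec_norm v)"
      using Yv[OF v] a0 by (rule mult_left_mono)
    finally show "cvec_norm ((X * Y) *\<^sub>v v) \<le> a * b * cvec_norm v" by simp
  qed (use a0 b0 in simp)
next
  fix X :: "complex mat" and a s
  assume X: "X \<in> carrier_mat n n" and a: "op_norm_le X a"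
  show "op_norm_le (s \<cdot>\<^sub>m X) (cmod s * a)"
    unfolding op_norm_le_def
  proof (intro conjI ballI)
    fix v :: "complex vec" assume "v \<in> carrier_vec (dim_col (s \<cdot>\<^sub>m X))"
    then have v: "v \<in> carrier_vec n" using X by simp
    have "(s \<cdot>\<^sub>m X) *\<^sub>v v = s \<cdot>\<^sub>v (X *\<^sub>v v)"
      using X v by (intro eq_vecI) (auto simp: scalar_prod_def sum_distrib_left algebra_simps)
    then show "cvec_norm ((s \<cdot>\<^sub>m X) *\<^sub>v v) \<le> cmod s * a * cvec_norm v"
      using a X v unfolding op_norm_le_def by (simp add: cvec_norm_smult mult_left_mono mult.assoc)
  qed (use a in \<open>simp add: op_norm_le_def\<close>)
qed

lemma cmod_conjugate_scalar_prod_le: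
  assumes "u \<in> carrier_vec n" "v \<in> carrier_vec n"
  shows "cmod (conjugate u \<bullet> v) \<le> cvec_norm u * cvec_norm v"
  using cmod_scalar_prod_le[of "conjugate u" n v] assms by (simp add: cvec_norm_conjugate)

lemma cvec_norm_unit_vec:
  assumes "i < n"
  shows "cvec_norm (unit_vec n i) = 1"
proof -
  have "(cvec_norm (unit_vec n i))\<^sup>2 = (\<Sum>j<n. if j = i then 1 else 0)"
    unfolding cvec_norm_sq by (intro sum.cong) (auto simp: unit_vec_def)
  also have "\<dots> = 1"
    using assms by simp
  finally show ?thesis
    using cvec_norm_nonneg[of "unit_vec n i"] by (simp add: power2_eq_1_iff)
qed

lemma sum_fourth_roots_of_unity:
  "(\<Sum>c\<in>{1, -1, \<i>, -\<i>}. f c) = f 1 + f (-1) + f \<i> + f (-\<i>)"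
  by (simp add: complex_eq_iff add.assoc)

lemma sum_fourth_roots_cmod_add_mult_sq:
  fixes a b :: complex
  shows "(\<Sum>c\<in>{1, -1, \<i>, -\<i>}. (cmod (a + c * b))\<^sup>2) = 4 * ((cmod a)\<^sup>2 + (cmod b)\<^sup>2)"
  unfolding sum_fourth_roots_of_unity cmod_power2 by (simp add: power2_eq_square algebra_simps)

lemma sum_fourth_roots_cvec_norm_add_smult_sq:
  assumes u: "u \<in> carrier_vec n" and v: "v \<in> carrier_vec n"
  shows "(\<Sum>c\<in>{1, -1, \<i>, -\<i>}. (cvec_norm (u + c \<cdot>\<^sub>v v))\<^sup>2) = 4 * ((cvec_norm u)\<^sup>2 + (cvec_norm v)\<^sup>2)"
proof -
  have "(\<Sum>c\<in>{1, -1, \<i>, -\<i>}. (cvec_norm (u + c \<cdot>\<^sub>v v))\<^sup>2)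
      = (\<Sum>c\<in>{1, -1, \<i>, -\<i>}. \<Sum>i<n. (cmod (u $ i + c * v $ i))\<^sup>2)"
    using u v by (intro sum.cong refl) (simp add: cvec_norm_sq)
  also have "\<dots> = (\<Sum>i<n. 4 * ((cmod (u $ i))\<^sup>2 + (cmod (v $ i))\<^sup>2))"
    by (subst sum.swap) (simp only: sum_fourth_roots_cmod_add_mult_sq)
  also have "\<dots> = 4 * ((cvec_norm u)\<^sup>2 + (cvec_norm v)\<^sup>2)"
    using u v by (simp add: cvec_norm_sq sum_distrib_left sum.distrib)
  finally show ?thesis .
qed

context
  fixes n :: nat and X :: "complex mat"
  assumes n: "0 < n" and X: "X \<in> carrier_mat n n"
begin

lemma cmod_quadratic_form_le_num_radius:
  assumes "v \<in> carrier_vec n" "cvec_norm v = 1"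
  shows "cmod (conjugate v \<bullet> (X *\<^sub>v v)) \<le> num_radius X"
proof -
  have "cmod (conjugate w \<bullet> (X *\<^sub>v w)) \<le> frob_norm X"
    if "w \<in> carrier_vec n" "cvec_norm w = 1" for w
    using cmod_conjugate_scalar_prod_le[of w n "X *\<^sub>v w"] cvec_norm_mult_mat_vec_le[OF X that(1)] X that
    by auto
  then have "bdd_above {cmod (conjugate w \<bullet> (X *\<^sub>v w)) | w. w \<in> carrier_vec n \<and> cvec_norm w = 1}"
    by (intro bdd_aboveI[of _ "frob_norm X"]) auto
  then show ?thesis
    unfolding num_radius_def using X assms by (auto intro!: cSup_upper)
qed

lemma num_radius_least:
  assumes "\<And>v. v \<in> carrier_vec n \<Longrightarrow> cvec_norm v = 1 \<Longrightarrow> cmod (conjugate v \<bullet> (X *\<^sub>v v)) \<le> c"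
  shows "num_radius X \<le> c"
  unfolding num_radius_def using X assms n cvec_norm_unit_vec[OF n]
  by (intro cSup_least) (auto intro!: exI[of _ "unit_vec n 0"])

lemma num_radius_nonneg: "0 \<le> num_radius X"
  using cmod_quadratic_form_le_num_radius[of "unit_vec n 0"] cvec_norm_unit_vec[OF n] norm_ge_zero
  by (metis order_trans unit_vec_carrier)

lemma cmod_quadratic_form_le:
  assumes w: "w \<in> carrier_vec n"
  shows "cmod (conjugate w \<bullet> (X *\<^sub>v w)) \<le> num_radius X * (cvec_norm w)\<^sup>2"
proof (cases "cvec_norm w = 0")
  case True
  then show ?thesis
    using cmod_conjugate_scalar_prod_le[of w n "X *\<^sub>v w"] X w by auto
next
  case False
  define r where "r = cvec_norm w"
  have r: "0 < r" using False cvec_norm_nonneg[of w] unfolding r_def by linarith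
  define v where "v = complex_of_real (1 / r) \<cdot>\<^sub>v w"
  have "v \<in> carrier_vec n" and "cvec_norm v = 1"
    using w r unfolding v_def r_def by (auto simp: cvec_norm_smult norm_divide)
  then have "cmod (conjugate v \<bullet> (X *\<^sub>v v)) \<le> num_radius X"
    by (rule cmod_quadratic_form_le_num_radius)
  moreover have "conjugate v \<bullet> (X *\<^sub>v v) = complex_of_real (1 / r\<^sup>2) * (conjugate w \<bullet> (X *\<^sub>v w))"
    unfolding v_def using X w
    by (simp add: conjugate_smult_vec mult_mat_vec smult_scalar_prod_distrib[of _ n]
        scalar_prod_smult_distrib[of _ n] power2_eq_square)
  then have "cmod (conjugate v \<bullet> (X *\<^sub>v v)) = cmod (conjugate w \<bullet> (X *\<^sub>v w)) / r\<^sup>2"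
    by (simp add: norm_mult norm_divide norm_power)
  ultimately show ?thesis
    using r unfolding r_def[symmetric] by (simp add: pos_divide_le_eq)
qed

lemma quadratic_form_add_smult:
  assumes u: "u \<in> carrier_vec n" and v: "v \<in> carrier_vec n"
  shows "conjugate (u + c \<cdot>\<^sub>v v) \<bullet> (X *\<^sub>v (u + c \<cdot>\<^sub>v v))
     = conjugate u \<bullet> (X *\<^sub>v u) + c * (conjugate u \<bullet> (X *\<^sub>v v))
       + cnj c * (conjugate v \<bullet> (X *\<^sub>v u)) + cnj c * c * (conjugate v \<bullet> (X *\<^sub>v v))"
proof -
  have "conjugate (u + c \<cdot>\<^sub>v v) = conjugate u + cnj c \<cdot>\<^sub>v conjugate v"
    using u v by (simp add: conjugate_add_vec[of _ n] conjugate_smult_vec)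
  moreover have "X *\<^sub>v (u + c \<cdot>\<^sub>v v) = X *\<^sub>v u + c \<cdot>\<^sub>v (X *\<^sub>v v)"
    using u v X by (simp add: mult_add_distrib_mat_vec[of _ n n] mult_mat_vec[of _ n n])
  ultimately show ?thesis
    using u v X
    by (simp add: add_scalar_prod_distrib[of _ n] scalar_prod_add_distrib[of _ n]
        smult_scalar_prod_distrib[of _ n] scalar_prod_smult_distrib[of _ n] algebra_simps)
qed

lemma cmod_sesquilinear_form_le:
  assumes u: "u \<in> carrier_vec n" and v: "v \<in> carrier_vec n"
  shows "cmod (conjugate u \<bullet> (X *\<^sub>v v)) \<le> num_radius X * ((cvec_norm u)\<^sup>2 + (cvec_norm v)\<^sup>2)"
proof -
  define U :: "complex set" where "U = {1, -1, \<i>, -\<i>}"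
  define Q where "Q c = conjugate (u + c \<cdot>\<^sub>v v) \<bullet> (X *\<^sub>v (u + c \<cdot>\<^sub>v v))" for c
  have "4 * cmod (conjugate u \<bullet> (X *\<^sub>v v)) = cmod (4 * (conjugate u \<bullet> (X *\<^sub>v v)))"
    by (simp add: norm_mult)
  also have "4 * (conjugate u \<bullet> (X *\<^sub>v v)) = (\<Sum>c\<in>U. cnj c * Q c)"
    unfolding U_def Q_def quadratic_form_add_smult[OF u v] sum_fourth_roots_of_unity
    by (simp add: algebra_simps)
  also have "cmod \<dots> \<le> (\<Sum>c\<in>U. cmod (cnj c * Q c))"
    by (rule norm_sum)
  also have "\<dots> = (\<Sum>c\<in>U. cmod (Q c))"
    unfolding U_def sum_fourth_roots_of_unity by (simp add: norm_mult)
  also have "\<dots> \<le> (\<Sum>c\<in>U. num_radius X * (cvec_norm (u + c \<cdot>\<^sub>v v))\<^sup>2)"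
    unfolding Q_def using u v by (intro sum_mono cmod_quadratic_form_le) auto
  also have "\<dots> = 4 * (num_radius X * ((cvec_norm u)\<^sup>2 + (cvec_norm v)\<^sup>2))"
    unfolding U_def sum_distrib_left[symmetric] sum_fourth_roots_cvec_norm_add_smult_sq[OF u v] by simp
  finally show ?thesis by simp
qed

lemma cvec_norm_mult_mat_vec_le_num_radius:
  assumes v: "v \<in> carrier_vec n"
  shows "cvec_norm (X *\<^sub>v v) \<le> 2 * num_radius X * cvec_norm v"
proof -
  define a where "a = cvec_norm (X *\<^sub>v v)"
  define b where "b = cvec_norm v"
  have "0 \<le> a" "0 \<le> b" unfolding a_def b_def by (simp_all add: cvec_norm_nonneg)
  consider "a = 0" | "0 < a" using \<open>0 \<le> a\<close> by linarith
  then have "a \<le> 2 * num_radius X * b"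
  proof cases
    case 1
    then show ?thesis using num_radius_nonneg \<open>0 \<le> b\<close> by simp
  next
    case 2
    have "a \<le> frob_norm X * b"
      unfolding a_def b_def by (rule cvec_norm_mult_mat_vec_le[OF X v])
    with 2 \<open>0 \<le> b\<close> have "0 < b"
      by (cases "b = 0") auto
    define u where "u = complex_of_real (b / a) \<cdot>\<^sub>v (X *\<^sub>v v)"
    have Xv: "X *\<^sub>v v \<in> carrier_vec n" using X v by simp
    then have u: "u \<in> carrier_vec n" unfolding u_def by simp
    have "cvec_norm u = b"
      unfolding u_def cvec_norm_smult a_def[symmetric] using 2 \<open>0 < b\<close> by (simp add: norm_divide)
    have "conjugate u \<bullet> (X *\<^sub>v v) = complex_of_real (b / a) * complex_of_real (a\<^sup>2)"
      unfolding u_def a_def using Xv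
      by (simp add: conjugate_smult_vec smult_scalar_prod_distrib[of _ n] conjugate_scalar_prod_self)
    also have "\<dots> = complex_of_real (a * b)"
      using 2 by (simp add: power2_eq_square)
    finally have "a * b \<le> num_radius X * (b\<^sup>2 + b\<^sup>2)"
      using cmod_sesquilinear_form_le[OF u v] \<open>cvec_norm u = b\<close> 2 \<open>0 < b\<close> unfolding b_def
      by (simp add: norm_mult)
    then show ?thesis
      using \<open>0 < b\<close> by (simp add: power2_eq_square algebra_simps)
  qed
  then show ?thesis unfolding a_def b_def .
qed

lemma op_norm_le_two_num_radius: "op_norm_le X (2 * num_radius X)"
  unfolding op_norm_le_def using X num_radius_nonneg cvec_norm_mult_mat_vec_le_num_radius by simp

lemma num_radius_le_op_norm:
  assumes "op_norm_le X c"
  shows "num_radius X \<le> c"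
proof (rule num_radius_least)
  fix v assume v: "v \<in> carrier_vec n" and "cvec_norm v = 1"
  then have "cmod (conjugate v \<bullet> (X *\<^sub>v v)) \<le> cvec_norm (X *\<^sub>v v)"
    using cmod_conjugate_scalar_prod_le[of v n "X *\<^sub>v v"] X by simp
  also have "\<dots> \<le> c"
    using assms v X \<open>cvec_norm v = 1\<close> unfolding op_norm_le_def by force
  finally show "cmod (conjugate v \<bullet> (X *\<^sub>v v)) \<le> c" .
qed

end

lemma two_mult_doubled_powers:
  fixes c x y :: real
  assumes "k \<ge> 1"
  shows "2 * (c * (2 * x) ^ (k - 1) * (2 * y) ^ (k - 1)) = c * 2 ^ (2 * k - 1) * x ^ (k - 1) * y ^ (k - 1)"
proof -
  obtain j where k: "k = Suc j" using assms by (cases k) auto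
  show ?thesis
    unfolding k by (simp add: power_mult_distrib power_even_eq power2_eq_square)
qed

theorem theorem5p1:
  fixes n :: nat and A B :: "complex mat" and p :: "complex poly"
  assumes "n \<ge> 1"
    and "A \<in> carrier_mat n n" and "B \<in> carrier_mat n n"
    and "degree p \<ge> 1"
  shows "frob_norm (poly_commutator p A B)
           \<le> frob_norm (commutator A B) *
             (\<Sum>k=1..degree p. cmod (coeff p k) * real k *
                 frob_norm A ^ (k - 1) * frob_norm B ^ (k - 1)) \<and>
         num_radius (poly_commutator p A B)
           \<le> num_radius (commutator A B) *
             (\<Sum>k=1..degree p. cmod (coeff p k) * real k * 2 ^ (2 * k - 1) *
                 num_radius A ^ (k - 1) * num_radius B ^ (k - 1))"
proof
  have n: "0 < n" and A: "A \<in> carrier_mat n n" and B: "B \<in> carrier_mat n n"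
    using assms by auto
  show "frob_norm (poly_commutator p A B)
           \<le> frob_norm (commutator A B) *
             (\<Sum>k=1..degree p. cmod (coeff p k) * real k *
                 frob_norm A ^ (k - 1) * frob_norm B ^ (k - 1))"
    by (rule frobenius.bounded_by_poly_commutator[OF A B order_refl order_refl order_refl])
  have C: "commutator A B \<in> carrier_mat n n" and P: "poly_commutator p A B \<in> carrier_mat n n"
    using A B by (auto simp: commutator_def poly_commutator_def poly_mat_def)
  have "num_radius (poly_commutator p A B) \<le> 2 * num_radius (commutator A B) *
      (\<Sum>k=1..degree p. cmod (coeff p k) * real k *
         (2 * num_radius A) ^ (k - 1) * (2 * num_radius B) ^ (k - 1))"
    by (intro num_radius_le_op_norm[OF n P] operator.bounded_by_poly_commutator[OF A B]
        op_norm_le_two_num_radius[OF n] A B C)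
  also have "\<dots> = num_radius (commutator A B) *
      (\<Sum>k=1..degree p. 2 * (cmod (coeff p k) * real k *
         (2 * num_radius A) ^ (k - 1) * (2 * num_radius B) ^ (k - 1)))"
    by (simp add: sum_distrib_left mult_ac)
  also have "\<dots> = num_radius (commutator A B) *
      (\<Sum>k=1..degree p. cmod (coeff p k) * real k * 2 ^ (2 * k - 1) *
         num_radius A ^ (k - 1) * num_radius B ^ (k - 1))"
    by (intro arg_cong[where f = "(*) _"] sum.cong refl two_mult_doubled_powers) auto
  finally show "num_radius (poly_commutator p A B)
           \<le> num_radius (commutator A B) *
             (\<Sum>k=1..degree p. cmod (coeff p k) * real k * 2 ^ (2 * k - 1) *
                 num_radius A ^ (k - 1) * num_radius B ^ (k - 1))" .
qed

end
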